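(* Let $R$ be a commutative ring with identity, $\mathcal S$ an associative $R$-algebra with identity, $\mathcal M$ a $2$-torsion free bimodule over $\mathcal S$, $\delta$ a derivation on $\mathcal S$ and $f:\mathcal S\to\mathcal M$ a bimodule homomorphism over $\mathcal S$. If $D:\mathcal S\to\mathcal M$ is a Jordan $(\delta,f)$-derivation on $\mathcal M$, then $D(xyx)=D(x)yx+f(x)\delta(y)x+f(x)y\delta(x)$ for all $x,y\in\mathcal S$.
   Context: A derivation on $\mathcal S$ is an additive map $\delta$ with $\delta(ab)=\delta(a)b+a\delta(b)$. An additive map $D:\mathcal S\to\mathcal M$ is a Jordan $(\delta,f)$-derivation if $D(x^2)=D(x)x+f(x)\delta(x)$ for all $x\in\mathcal S$. $\mathcal M$ is $2$-torsion free if $2m=0$ implies $m=0$. *)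

theory Defs
  imports Main
begin

definition is_algebra_over :: "('r::comm_ring_1 \<Rightarrow> 's::ring_1 \<Rightarrow> 's) \<Rightarrow> bool" where
  "is_algebra_over smul \<longleftrightarrow>
     (\<forall>r a b. smul r (a + b) = smul r a + smul r b) \<and>
     (\<forall>r q a. smul (r + q) a = smul r a + smul q a) \<and>
     (\<forall>r q a. smul (r * q) a = smul r (smul q a)) \<and>
     (\<forall>a. smul 1 a = a) \<and>
     (\<forall>r a b. smul r (a * b) = smul r a * b) \<and>
     (\<forall>r a b. smul r (a * b) = a * smul r b)"

definition is_bimodule :: "('s::ring_1 \<Rightarrow> 'm::ab_group_add \<Rightarrow> 'm) \<Rightarrow> ('m \<Rightarrow> 's \<Rightarrow> 'm) \<Rightarrow> bool" where
  "is_bimodule lact ract \<longleftrightarrow>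
     (\<forall>a m n. lact a (m + n) = lact a m + lact a n) \<and>
     (\<forall>a b m. lact (a + b) m = lact a m + lact b m) \<and>
     (\<forall>a b m. lact (a * b) m = lact a (lact b m)) \<and>
     (\<forall>m. lact 1 m = m) \<and>
     (\<forall>a m n. ract (m + n) a = ract m a + ract n a) \<and>
     (\<forall>a b m. ract m (a + b) = ract m a + ract m b) \<and>
     (\<forall>a b m. ract m (a * b) = ract (ract m a) b) \<and>
     (\<forall>m. ract m 1 = m) \<and>
     (\<forall>a b m. ract (lact a m) b = lact a (ract m b))"

definition two_torsion_free :: "'m::ab_group_add set \<Rightarrow> bool" where
  "two_torsion_free M \<longleftrightarrow> (\<forall>m \<in> M. m + m = 0 \<longrightarrow> m = 0)"

definition additive_map :: "('a::ab_group_add \<Rightarrow> 'b::ab_group_add) \<Rightarrow> bool" where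
  "additive_map g \<longleftrightarrow> (\<forall>a b. g (a + b) = g a + g b)"

definition is_derivation :: "('s::ring_1 \<Rightarrow> 's) \<Rightarrow> bool" where
  "is_derivation \<delta> \<longleftrightarrow> additive_map \<delta> \<and> (\<forall>a b. \<delta> (a * b) = \<delta> a * b + a * \<delta> b)"

definition is_bimodule_hom ::
  "('s::ring_1 \<Rightarrow> 'm::ab_group_add \<Rightarrow> 'm) \<Rightarrow> ('m \<Rightarrow> 's \<Rightarrow> 'm) \<Rightarrow> ('s \<Rightarrow> 'm) \<Rightarrow> bool" where
  "is_bimodule_hom lact ract f \<longleftrightarrow> additive_map f \<and>
     (\<forall>a x. f (a * x) = lact a (f x)) \<and> (\<forall>a x. f (x * a) = ract (f x) a)"

definition is_jordan_der ::
  "('m::ab_group_add \<Rightarrow> 's::ring_1 \<Rightarrow> 'm) \<Rightarrow> ('s \<Rightarrow> 's) \<Rightarrow> ('s \<Rightarrow> 'm) \<Rightarrow> ('s \<Rightarrow> 'm) \<Rightarrow> bool" where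
  "is_jordan_der ract \<delta> f D \<longleftrightarrow> additive_map D \<and>
     (\<forall>x. D (x * x) = ract (D x) x + ract (f x) (\<delta> x))"

end

theory Submission
  imports Defs
begin

text \<open>Polarising the Jordan identity at \<open>x + y\<close> gives a formula for \<open>D\<close> on the Jordan product
  \<open>a \<circ> b = ab + ba\<close>. Since \<open>x \<circ> (x \<circ> y) = x\<^sup>2 \<circ> y + 2xyx\<close>, evaluating \<open>D\<close> on both sides with
  that formula determines \<open>2 D(xyx)\<close>, and 2-torsion freeness removes the factor 2.
  Only the right module structure and the right linearity of \<open>f\<close> enter.\<close>

locale jordan_derivation =
  fixes ract :: "'m::ab_group_add \<Rightarrow> 's::ring_1 \<Rightarrow> 'm"
    and \<delta> :: "'s \<Rightarrow> 's"
    and f D :: "'s \<Rightarrow> 'm"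
  assumes ract_add_left: "ract (m + n) a = ract m a + ract n a"
    and ract_add_right: "ract m (a + b) = ract m a + ract m b"
    and ract_mult: "ract m (a * b) = ract (ract m a) b"
    and derivation: "is_derivation \<delta>"
    and f_additive: "additive_map f"
    and f_mult_right: "f (a * b) = ract (f a) b"
    and jordan: "is_jordan_der ract \<delta> f D"
begin

lemma D_add: "D (a + b) = D a + D b"
  and D_square: "D (a * a) = ract (D a) a + ract (f a) (\<delta> a)"
  using jordan unfolding is_jordan_der_def additive_map_def by auto

lemma f_add: "f (a + b) = f a + f b"
  using f_additive unfolding additive_map_def by auto

lemma derivation_add: "\<delta> (a + b) = \<delta> a + \<delta> b"
  and derivation_mult: "\<delta> (a * b) = \<delta> a * b + a * \<delta> b"
  using derivation unfolding is_derivation_def additive_map_def by auto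

lemma D_jordan_product:
  "D (a * b + b * a) = ract (D a) b + ract (D b) a + ract (f a) (\<delta> b) + ract (f b) (\<delta> a)"
proof -
  have "(a + b) * (a + b) = a * a + (a * b + b * a) + b * b"
    by (simp add: algebra_simps)
  then have "D (a * a) + D (a * b + b * a) + D (b * b) = D ((a + b) * (a + b))"
    by (simp add: D_add)
  also have "\<dots> = ract (D (a + b)) (a + b) + ract (f (a + b)) (\<delta> (a + b))"
    by (rule D_square)
  finally show ?thesis
    by (simp add: D_square D_add f_add derivation_add ract_add_left ract_add_right add_ac)
qed

lemma D_sandwich_double:
  fixes x y :: 's
  defines "R \<equiv> ract (D x) (y * x) + ract (ract (f x) (\<delta> y)) x + ract (f x) (y * \<delta> x)"
  shows "D (x * y * x) + D (x * y * x) = R + R"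
proof -
  let ?u = "x * y + y * x"
  have "x * ?u + ?u * x = (x * x) * y + y * (x * x) + (x * y * x + x * y * x)"
    by (simp add: algebra_simps)
  then have "D (x * ?u + ?u * x) = D ((x * x) * y + y * (x * x)) + (D (x * y * x) + D (x * y * x))"
    by (simp add: D_add)
  moreover have "D (x * ?u + ?u * x) = D ((x * x) * y + y * (x * x)) + (R + R)"
    unfolding D_jordan_product R_def
    by (simp add: D_add D_square f_add derivation_add derivation_mult f_mult_right
        ract_add_left ract_add_right ract_mult distrib_left distrib_right mult.assoc add_ac)
  ultimately show ?thesis
    by simp
qed

end

lemma two_torsion_free_double_cancel:
  assumes "two_torsion_free (UNIV :: 'm::ab_group_add set)" and "m + m = n + (n :: 'm)"
  shows "m = n"
proof -
  have "(m - n) + (m - n) = 0"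
    using assms(2) by (simp add: algebra_simps)
  then have "m - n = 0"
    using assms(1) unfolding two_torsion_free_def by blast
  then show ?thesis
    by simp
qed

lemma jordan_derivationI:
  assumes "is_bimodule lact ract" and "is_derivation \<delta>"
    and "is_bimodule_hom lact ract f" and "is_jordan_der ract \<delta> f D"
  shows "jordan_derivation ract \<delta> f D"
proof
  show "ract (m + n) a = ract m a + ract n a" "ract m (a + b) = ract m a + ract m b"
    "ract m (a * b) = ract (ract m a) b" for m n a b
    using assms(1) unfolding is_bimodule_def by blast+
  show "additive_map f" "f (a * b) = ract (f a) b" for a b
    using assms(3) unfolding is_bimodule_hom_def by blast+
qed (use assms in blast)+

theorem lemma3p5:
  fixes smul :: "'r::comm_ring_1 \<Rightarrow> 's::ring_1 \<Rightarrow> 's"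
    and lact :: "'s \<Rightarrow> 'm::ab_group_add \<Rightarrow> 'm"
    and ract :: "'m \<Rightarrow> 's \<Rightarrow> 'm"
    and \<delta> :: "'s \<Rightarrow> 's"
    and f D :: "'s \<Rightarrow> 'm"
  assumes "is_algebra_over smul"
    and "is_bimodule lact ract"
    and "two_torsion_free (UNIV :: 'm set)"
    and "is_derivation \<delta>"
    and "is_bimodule_hom lact ract f"
    and "is_jordan_der ract \<delta> f D"
  shows "\<forall>x y. D (x * y * x) =
           ract (D x) (y * x) + ract (ract (f x) (\<delta> y)) x + ract (f x) (y * \<delta> x)"
proof (intro allI)
  fix x y
  interpret jordan_derivation ract \<delta> f D
    by (rule jordan_derivationI[OF assms(2,4-6)])
  show "D (x * y * x) = ract (D x) (y * x) + ract (ract (f x) (\<delta> y)) x + ract (f x) (y * \<delta> x)"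
    using two_torsion_free_double_cancel[OF assms(3) D_sandwich_double] .
qed

end
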